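(* Let $\mathcal{K}=(\mathcal{D},\mathsf{O})$ be a $\mathcal{DBL}$ knowledge base over $V$ with $\mathcal{D}=(\mathcal{B}_1,\mathcal{B}_\rightarrow)$, let $c\in\mathfrak{C}$, and let $\phi$ be a context formula for $c$ with respect to $\mathsf{O}$. If $\delta_{\mathcal{B}_\rightarrow}(\phi)>0$, then $P_{\mathcal{K}}(c[\infty])=1$ (independently of $\mathcal{B}_1$).
   Context: An ontology language $\mathcal{L}$ consists of sets $\mathfrak{A}$ (axioms) and $\mathfrak{C}$ (consequences), a class $\mathfrak{O}$ of finite subsets of $\mathfrak{A}$ (ontologies) closed under subsets, a class $\mathfrak{I}$ of interpretations, and a relation $\models\subseteq\mathfrak{I}\times(\mathfrak{A}\cup\mathfrak{C})$; $\mathcal{O}\models c$ means every interpretation satisfying all axioms of $\mathcal{O}$ satisfies $c$. Let $V$ be a finite set of Boolean variables. A $V$-ontology is a finite set $\mathsf{O}$ of pairs $\langle\alpha:\kappa\rangle$ with $\alpha\in\mathfrak{A}$ and $\kappa$ a consistent set of literals over $V$, such that $\{\alpha\mid\langle\alpha:\kappa\rangle\in\mathsf{O}\}\in\mathfrak{O}$. For a valuation (world) $\mathcal{W}$ of $V$, $\mathsf{O}_{\mathcal{W}}:=\{\alpha\mid\langle\alpha:\kappa\rangle\in\mathsf{O},\ \mathcal{W}\models_p\kappa\}$. A context formula for $c$ w.r.t. $\mathsf{O}$ is a propositional formula $\phi$ over $V$ such that for every valuation $\mathcal{W}$ of $V$: $\mathsf{O}_{\mathcal{W}}\models c$ iff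 $\mathcal{W}\models_p\phi$. A two-slice BN (TBN) over $V$ is a pair $(G,\Phi)$ with $G$ a DAG on $V\cup V'$, $V'=\{x'\mid x\in V\}$, with no edges into elements of $V$, and $\Phi$ giving for each $x'\in V'$ a conditional distribution $P(x'\mid\pi(x'))$ given its parents. A DBN over $V$ is a pair $\mathcal{D}=(\mathcal{B}_1,\mathcal{B}_\rightarrow)$ with $\mathcal{B}_1$ a BN over $V$ and $\mathcal{B}_\rightarrow$ a TBN over $V$. The unraveling $\mathcal{B}_{1:t}$ is the BN over $V_1\cup\dots\cup V_t$ (copies $x_i$ of each $x\in V$) in which the nodes of $V_1$ have the structure and tables of $\mathcal{B}_1$, and for $2\le i\le t$ each $x_i$ has as parents the images of $\pi(x')$ in $\mathcal{B}_\rightarrow$ under $y\mapsto y_{i-1}$, $y'\mapsto y_i$, with the conditional table of $x'$. For a valuation $\mathcal{W}$ of $V_1\cup\dots\cup V_t$, $\mathcal{W}(i)$ denotes its restriction to $V_i$, viewed as a valuation of $V$. A $\mathcal{DBL}$ KB is a pair $\mathcal{K}=(\mathcal{D},\mathsf{O})$ with $\mathcal{D}$ a DBN over $V$ and $\mathsf{O}$ a $V$-ontology. The probability of observing $c$ within $t$ steps is $P_{\mathcal{K}}(c[1:t]):=\sum_{\mathcal{W}\,:\,\exists i\in\{1,\dots,t\}.\ \mathsf{O}_{\mathcal{W}(i)}\models c}P_{\mathcal{B}_{1:t}}(\mathcal{W})$, the sum over valuations $\mathcal{W}$ of $V_1\cup\dots\cup V_t$; this is nondecreasing in $t$ and bounded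 by 1, and the probability of eventually observing $c$ is $P_{\mathcal{K}}(c[\infty]):=\lim_{t\to\infty}P_{\mathcal{K}}(c[1:t])$. A TBN $\mathcal{B}$ over $V$ defines a time-homogeneous Markov chain on the finite set of valuations of $V$ with transition probabilities $P(\mathcal{W}'\mid\mathcal{W}):=\prod_{x'\in V'}P(x'\mid\pi(x'))$ evaluated with $V$ set according to $\mathcal{W}$ and $V'$ according to $\mathcal{W}'$. A distribution $P_W$ on valuations of $V$ is stationary if $\sum_{\mathcal{W}}P(\mathcal{V}\mid\mathcal{W})P_W(\mathcal{W})=P_W(\mathcal{V})$ for every valuation $\mathcal{V}$. Let $\Delta_{\mathcal{B}}$ be the set of stationary distributions, and for a propositional formula $\phi$ over $V$ let $\delta_{\mathcal{B}}(\phi):=\min_{P\in\Delta_{\mathcal{B}}}\sum_{\mathcal{W}\models_p\phi}P(\mathcal{W})$. *)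

theory Defs
  imports Complex_Main
begin

text \<open>An ontology language: axioms of type 'a (the set of axioms is UNIV),
  consequences of type 'c, a class Ont of ontologies (finite sets of axioms),
  a set Itp of interpretations, and satisfaction relations sa (axioms), sc (consequences).\<close>

definition ontology_language :: "'a set set \<Rightarrow> bool" where
  "ontology_language Ont \<longleftrightarrow> (\<forall>X\<in>Ont. finite X) \<and> (\<forall>X\<in>Ont. \<forall>Y. Y \<subseteq> X \<longrightarrow> Y \<in> Ont)"

definition entails :: "'i set \<Rightarrow> ('i \<Rightarrow> 'a \<Rightarrow> bool) \<Rightarrow> ('i \<Rightarrow> 'c \<Rightarrow> bool) \<Rightarrow> 'a set \<Rightarrow> 'c \<Rightarrow> bool" where
  "entails Itp sa sc X c \<longleftrightarrow> (\<forall>I\<in>Itp. (\<forall>\<alpha>\<in>X. sa I \<alpha>) \<longrightarrow> sc I c)"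

text \<open>Valuations (worlds) of V are represented by the set of variables that are true (a subset of V).
  A literal is a pair (x, b): x if b, otherwise the negation of x.\<close>

definition lits_consistent :: "'v set \<Rightarrow> ('v \<times> bool) set \<Rightarrow> bool" where
  "lits_consistent V \<kappa> \<longleftrightarrow> (\<forall>(x, b)\<in>\<kappa>. x \<in> V) \<and> \<not> (\<exists>x. (x, True) \<in> \<kappa> \<and> (x, False) \<in> \<kappa>)"

definition sat_lits :: "'v set \<Rightarrow> ('v \<times> bool) set \<Rightarrow> bool" where
  "sat_lits W \<kappa> \<longleftrightarrow> (\<forall>(x, b)\<in>\<kappa>. (x \<in> W) = b)"

definition V_ontology :: "'v set \<Rightarrow> 'a set set \<Rightarrow> ('a \<times> ('v \<times> bool) set) set \<Rightarrow> bool" where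
  "V_ontology V Ont Ov \<longleftrightarrow> finite Ov \<and> (\<forall>(\<alpha>, \<kappa>)\<in>Ov. lits_consistent V \<kappa>) \<and> fst ` Ov \<in> Ont"

definition restrict_ont :: "('a \<times> ('v \<times> bool) set) set \<Rightarrow> 'v set \<Rightarrow> 'a set" where
  "restrict_ont Ov W = {\<alpha>. \<exists>\<kappa>. (\<alpha>, \<kappa>) \<in> Ov \<and> sat_lits W \<kappa>}"

datatype 'v pform = PTrue | PFalse | PVar 'v | PNot "'v pform"
  | PAnd "'v pform" "'v pform" | POr "'v pform" "'v pform"

fun peval :: "'v set \<Rightarrow> 'v pform \<Rightarrow> bool" where
  "peval W PTrue = True"
| "peval W PFalse = False"
| "peval W (PVar x) = (x \<in> W)"
| "peval W (PNot f) = (\<not> peval W f)"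
| "peval W (PAnd f g) = (peval W f \<and> peval W g)"
| "peval W (POr f g) = (peval W f \<or> peval W g)"

fun atoms :: "'v pform \<Rightarrow> 'v set" where
  "atoms PTrue = {}"
| "atoms PFalse = {}"
| "atoms (PVar x) = {x}"
| "atoms (PNot f) = atoms f"
| "atoms (PAnd f g) = atoms f \<union> atoms g"
| "atoms (POr f g) = atoms f \<union> atoms g"

definition context_formula ::
  "'v set \<Rightarrow> 'i set \<Rightarrow> ('i \<Rightarrow> 'a \<Rightarrow> bool) \<Rightarrow> ('i \<Rightarrow> 'c \<Rightarrow> bool)
   \<Rightarrow> ('a \<times> ('v \<times> bool) set) set \<Rightarrow> 'c \<Rightarrow> 'v pform \<Rightarrow> bool" where
  "context_formula V Itp sa sc Ov c \<phi> \<longleftrightarrow> atoms \<phi> \<subseteq> V \<and>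
     (\<forall>W. W \<subseteq> V \<longrightarrow> (entails Itp sa sc (restrict_ont Ov W) c \<longleftrightarrow> peval W \<phi>))"

text \<open>A BN on node set N: parent function par, and cpt n S = probability that n is true
  given that exactly the parents in S (a subset of par n) are true.\<close>

definition bn_wf :: "'n set \<Rightarrow> ('n \<Rightarrow> 'n set) \<Rightarrow> ('n \<Rightarrow> 'n set \<Rightarrow> real) \<Rightarrow> bool" where
  "bn_wf N par cpt \<longleftrightarrow> finite N \<and> (\<forall>n\<in>N. par n \<subseteq> N)
     \<and> acyclic {(p, n). n \<in> N \<and> p \<in> par n}
     \<and> (\<forall>n\<in>N. \<forall>S. S \<subseteq> par n \<longrightarrow> 0 \<le> cpt n S \<and> cpt n S \<le> 1)"

definition bn_joint :: "'n set \<Rightarrow> ('n \<Rightarrow> 'n set) \<Rightarrow> ('n \<Rightarrow> 'n set \<Rightarrow> real) \<Rightarrow> 'n set \<Rightarrow> real" where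
  "bn_joint N par cpt W =
     (\<Prod>n\<in>N. if n \<in> W then cpt n (W \<inter> par n) else 1 - cpt n (W \<inter> par n))"

datatype 'v tnode = Cur 'v | Nxt 'v

text \<open>TBN over V: parT x = parents of x' (nodes among V and V'); no edges into V.
  cptT x S = probability that x' is true given the set S of true parents.\<close>

definition tbn_wf :: "'v set \<Rightarrow> ('v \<Rightarrow> 'v tnode set) \<Rightarrow> ('v \<Rightarrow> 'v tnode set \<Rightarrow> real) \<Rightarrow> bool" where
  "tbn_wf V parT cptT \<longleftrightarrow> finite V \<and> (\<forall>x\<in>V. parT x \<subseteq> Cur ` V \<union> Nxt ` V)
     \<and> acyclic {(p, Nxt x) | p x. x \<in> V \<and> p \<in> parT x}
     \<and> (\<forall>x\<in>V. \<forall>S. S \<subseteq> parT x \<longrightarrow> 0 \<le> cptT x S \<and> cptT x S \<le> 1)"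

definition tbn_trans :: "'v set \<Rightarrow> ('v \<Rightarrow> 'v tnode set) \<Rightarrow> ('v \<Rightarrow> 'v tnode set \<Rightarrow> real)
    \<Rightarrow> 'v set \<Rightarrow> 'v set \<Rightarrow> real" where
  "tbn_trans V parT cptT W W' =
     (\<Prod>x\<in>V. let S = {p \<in> parT x. case p of Cur y \<Rightarrow> y \<in> W | Nxt y \<Rightarrow> y \<in> W'}
             in if x \<in> W' then cptT x S else 1 - cptT x S)"

definition stationary :: "'v set \<Rightarrow> ('v \<Rightarrow> 'v tnode set) \<Rightarrow> ('v \<Rightarrow> 'v tnode set \<Rightarrow> real)
    \<Rightarrow> ('v set \<Rightarrow> real) \<Rightarrow> bool" where
  "stationary V parT cptT P \<longleftrightarrow> (\<forall>W\<in>Pow V. 0 \<le> P W) \<and> (\<Sum>W\<in>Pow V. P W) = 1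
     \<and> (\<forall>U\<in>Pow V. (\<Sum>W\<in>Pow V. tbn_trans V parT cptT W U * P W) = P U)"

text \<open>delta_B(phi): the minimum over stationary distributions of the mass of phi-worlds
  (the set is compact and nonempty, so the infimum is attained).\<close>

definition delta :: "'v set \<Rightarrow> ('v \<Rightarrow> 'v tnode set) \<Rightarrow> ('v \<Rightarrow> 'v tnode set \<Rightarrow> real)
    \<Rightarrow> 'v pform \<Rightarrow> real" where
  "delta V parT cptT \<phi> =
     Inf {(\<Sum>W\<in>{W\<in>Pow V. peval W \<phi>}. P W) | P. stationary V parT cptT P}"

text \<open>Node (x, i) is the copy x_i of x in V_i.\<close>

definition unr_par :: "('v \<Rightarrow> 'v set) \<Rightarrow> ('v \<Rightarrow> 'v tnode set) \<Rightarrow> 'v \<times> nat \<Rightarrow> ('v \<times> nat) set" where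
  "unr_par par1 parT = (\<lambda>(x, i).
     if i = 1 then (\<lambda>y. (y, 1)) ` par1 x
     else {(y, i - 1) | y. Cur y \<in> parT x} \<union> {(y, i) | y. Nxt y \<in> parT x})"

definition unr_cpt :: "('v \<Rightarrow> 'v set \<Rightarrow> real) \<Rightarrow> ('v \<Rightarrow> 'v tnode set \<Rightarrow> real)
    \<Rightarrow> 'v \<times> nat \<Rightarrow> ('v \<times> nat) set \<Rightarrow> real" where
  "unr_cpt cpt1 cptT = (\<lambda>(x, i) S.
     if i = 1 then cpt1 x {y. (y, 1) \<in> S}
     else cptT x ({Cur y | y. (y, i - 1) \<in> S} \<union> {Nxt y | y. (y, i) \<in> S}))"

definition slice :: "('v \<times> nat) set \<Rightarrow> nat \<Rightarrow> 'v set" where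
  "slice W i = {x. (x, i) \<in> W}"

definition prob_within ::
  "'v set \<Rightarrow> ('v \<Rightarrow> 'v set) \<Rightarrow> ('v \<Rightarrow> 'v set \<Rightarrow> real)
   \<Rightarrow> ('v \<Rightarrow> 'v tnode set) \<Rightarrow> ('v \<Rightarrow> 'v tnode set \<Rightarrow> real)
   \<Rightarrow> 'i set \<Rightarrow> ('i \<Rightarrow> 'a \<Rightarrow> bool) \<Rightarrow> ('i \<Rightarrow> 'c \<Rightarrow> bool)
   \<Rightarrow> ('a \<times> ('v \<times> bool) set) set \<Rightarrow> 'c \<Rightarrow> nat \<Rightarrow> real" where
  "prob_within V par1 cpt1 parT cptT Itp sa sc Ov c t =
     (\<Sum>W\<in>{W. W \<subseteq> V \<times> {1..t} \<and>
              (\<exists>i\<in>{1..t}. entails Itp sa sc (restrict_ont Ov (slice W i)) c)}.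
        bn_joint (V \<times> {1..t}) (unr_par par1 parT) (unr_cpt cpt1 cptT) W)"

end

theory Submission
  imports Defs
begin

text \<open>Under the transition network the worlds of V form a finite Markov chain, and c is not
  observed within t + 1 steps exactly when the run stays in the worlds violating \<phi> up to time t.
  The probability of such runs is nonincreasing in t; if its limit were positive, a limit point
  of the Cesaro averages of the surviving sub-probability vectors would be a nonzero invariant
  measure of the chain killed on the \<phi>-worlds. Normalised, it is a stationary distribution
  that gives the \<phi>-worlds mass 0, contradicting \<delta>(\<phi>) > 0.\<close>

lemma sum_Pow_insert:
  assumes "finite A" "a \<notin> A"
  shows "(\<Sum>X\<in>Pow (insert a A). f X) = (\<Sum>X\<in>Pow A. f X + f (insert a X))"
proof -
  have "inj_on (insert a) (Pow A)"
    using assms(2) by (auto simp: inj_on_def)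
  moreover have "Pow A \<inter> insert a ` Pow A = {}"
    using assms(2) by auto
  ultimately show ?thesis
    unfolding Pow_insert using assms(1)
    by (simp add: sum.union_disjoint sum.reindex sum.distrib)
qed

lemma finite_acyclic_obtain_childless:
  assumes "finite N" "N \<noteq> {}" "acyclic {(q, n). n \<in> N \<and> q \<in> par n}"
  obtains s where "s \<in> N" "\<And>n. n \<in> N \<Longrightarrow> s \<notin> par n"
proof -
  define r where "r = {(q, n). n \<in> N \<and> q \<in> par n \<and> q \<in> N}"
  have "finite r"
    by (rule finite_subset[of _ "N \<times> N"]) (use assms(1) in \<open>auto simp: r_def\<close>)
  moreover have "acyclic r"
    by (rule acyclic_subset[OF assms(3)]) (auto simp: r_def)
  ultimately have "wf (r\<inverse>)"
    by (rule finite_acyclic_wf_converse)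
  then obtain s where "s \<in> N" "\<And>n. (n, s) \<in> r\<inverse> \<Longrightarrow> n \<notin> N"
    using wfE_min[of "r\<inverse>"] assms(2) by blast
  then show ?thesis
    using that unfolding r_def by blast
qed

text \<open>Sum out a childless node first: its factor is the only one depending on it, and its
  two values contribute p + (1 - p) = 1.\<close>

lemma sum_Pow_prod_cond_prob_eq_1:
  fixes p :: "'n \<Rightarrow> 'n set \<Rightarrow> real"
  assumes "finite N" "acyclic {(q, n). n \<in> N \<and> q \<in> par n}"
    and "\<And>n W. n \<in> N \<Longrightarrow> p n W = p n (W \<inter> par n)"
  shows "(\<Sum>W\<in>Pow N. \<Prod>n\<in>N. if n \<in> W then p n W else 1 - p n W) = 1"
  using assms
proof (induction N rule: finite_psubset_induct)
  case (psubset N)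
  show ?case
  proof (cases "N = {}")
    case False
    then obtain s where s: "s \<in> N" "\<And>n. n \<in> N \<Longrightarrow> s \<notin> par n"
      using finite_acyclic_obtain_childless psubset.prems(1) psubset.hyps(1) by blast
    define N' where "N' = N - {s}"
    define f where "f W = (\<Prod>n\<in>N'. if n \<in> W then p n W else 1 - p n W)" for W
    have N: "N = insert s N'" "s \<notin> N'" "finite N'"
      using s(1) psubset.hyps(1) by (auto simp: N'_def)
    have IH: "(\<Sum>W\<in>Pow N'. f W) = 1"
      unfolding f_def
    proof (rule psubset.IH)
      show "acyclic {(q, n). n \<in> N' \<and> q \<in> par n}"
        by (rule acyclic_subset[OF psubset.prems(1)]) (auto simp: N'_def)
      show "\<And>n W. n \<in> N' \<Longrightarrow> p n W = p n (W \<inter> par n)"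
        using psubset.prems(2) unfolding N'_def by blast
    qed (use s in \<open>auto simp: N'_def\<close>)
    have p_insert: "p n (insert s W) = p n W" if "n \<in> N" for n W
    proof -
      have "insert s W \<inter> par n = W \<inter> par n"
        using s(2)[OF that] by auto
      then show ?thesis
        using psubset.prems(2)[OF that, of "insert s W"] psubset.prems(2)[OF that, of W] by metis
    qed
    have summed_out: "(\<Prod>n\<in>N. if n \<in> W then p n W else 1 - p n W)
        + (\<Prod>n\<in>N. if n \<in> insert s W then p n (insert s W) else 1 - p n (insert s W))
        = f W"
      if "W \<in> Pow N'" for W
    proof -
      have "(\<Prod>n\<in>N'. if n \<in> insert s W then p n (insert s W) else 1 - p n (insert s W)) = f W"
        unfolding f_def by (rule prod.cong) (use N that in \<open>auto simp: p_insert\<close>)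
      moreover have "s \<notin> W"
        using N(2) that by blast
      ultimately show ?thesis
        using N by (simp add: f_def p_insert[OF \<open>s \<in> N\<close>] algebra_simps)
    qed
    show ?thesis
      unfolding N(1) sum_Pow_insert[OF N(3,2)] using summed_out IH N(1)
      by (metis (no_types, lifting) sum.cong)
  qed simp
qed

lemma bn_joint_nonneg:
  assumes "bn_wf N par cpt"
  shows "0 \<le> bn_joint N par cpt W"
  using assms unfolding bn_joint_def bn_wf_def by (force intro: prod_nonneg)

lemma bn_joint_sum_eq_1:
  assumes "bn_wf N par cpt"
  shows "(\<Sum>W\<in>Pow N. bn_joint N par cpt W) = 1"
  unfolding bn_joint_def
  by (rule sum_Pow_prod_cond_prob_eq_1[where p = "\<lambda>n W. cpt n (W \<inter> par n)"])
    (use assms in \<open>auto simp: bn_wf_def Int_assoc\<close>)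

definition tbn_true_parents ::
  "('v \<Rightarrow> 'v tnode set) \<Rightarrow> 'v \<Rightarrow> 'v set \<Rightarrow> 'v set \<Rightarrow> 'v tnode set" where
  "tbn_true_parents parT x W W' = {p \<in> parT x. case p of Cur y \<Rightarrow> y \<in> W | Nxt y \<Rightarrow> y \<in> W'}"

lemma tbn_trans_eq:
  "tbn_trans V parT cptT W W' = (\<Prod>x\<in>V. if x \<in> W' then cptT x (tbn_true_parents parT x W W')
     else 1 - cptT x (tbn_true_parents parT x W W'))"
  unfolding tbn_trans_def tbn_true_parents_def Let_def ..

lemma tbn_trans_nonneg:
  assumes "tbn_wf V parT cptT"
  shows "0 \<le> tbn_trans V parT cptT W W'"
proof -
  have "tbn_true_parents parT x W W' \<subseteq> parT x" for x
    by (auto simp: tbn_true_parents_def)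
  then show ?thesis
    using assms unfolding tbn_trans_eq tbn_wf_def by (force intro: prod_nonneg)
qed

lemma tbn_intra_slice_acyclic:
  assumes "acyclic {(p, Nxt x) | p x. x \<in> V \<and> p \<in> parT x}"
  shows "acyclic {(y, x). x \<in> V \<and> y \<in> {y. Nxt y \<in> parT x}}"
proof -
  have "(Nxt a, Nxt b) \<in> {(p, Nxt x) | p x. x \<in> V \<and> p \<in> parT x}\<^sup>+"
    if "(a, b) \<in> {(y, x). x \<in> V \<and> y \<in> {y. Nxt y \<in> parT x}}\<^sup>+" for a b
    using that by induction (auto intro: trancl_into_trancl)
  then show ?thesis
    using assms unfolding acyclic_def by blast
qed

text \<open>For a fixed current state, a TBN is a Bayesian network on the next slice V' whose
  conditional probabilities depend on the current state as a parameter.\<close>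

lemma tbn_trans_sum_eq_1:
  assumes "tbn_wf V parT cptT"
  shows "(\<Sum>W'\<in>Pow V. tbn_trans V parT cptT W W') = 1"
  unfolding tbn_trans_eq
proof (rule sum_Pow_prod_cond_prob_eq_1[where par = "\<lambda>x. {y. Nxt y \<in> parT x}"])
  show "finite V" "acyclic {(y, x). x \<in> V \<and> y \<in> {y. Nxt y \<in> parT x}}"
    using assms tbn_intra_slice_acyclic unfolding tbn_wf_def by blast+
  show "cptT x (tbn_true_parents parT x W W')
      = cptT x (tbn_true_parents parT x W (W' \<inter> {y. Nxt y \<in> parT x}))" for x W'
    by (rule arg_cong[where f = "cptT x"]) (auto simp: tbn_true_parents_def split: tnode.splits)
qed

lemma bounded_real_seq_convergent_subseq:
  fixes f :: "nat \<Rightarrow> real"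
  assumes "\<And>n. \<bar>f n\<bar> \<le> B"
  obtains r l where "strict_mono r" "(\<lambda>n. f (r n)) \<longlonglongrightarrow> l"
proof -
  obtain r where r: "strict_mono r" "monoseq (\<lambda>n. f (r n))"
    using seq_monosub by blast
  have "Bseq (\<lambda>n. f (r n))"
    using assms by (intro BseqI'[of _ B]) auto
  then have "convergent (\<lambda>n. f (r n))"
    using Bseq_monoseq_convergent r(2) by blast
  then show ?thesis
    using that r(1) unfolding convergent_def by blast
qed

lemma finite_bounded_seqs_convergent_subseq:
  fixes f :: "nat \<Rightarrow> 's \<Rightarrow> real"
  assumes "finite S" "\<And>n s. s \<in> S \<Longrightarrow> \<bar>f n s\<bar> \<le> B"
  shows "\<exists>r l. strict_mono r \<and> (\<forall>s\<in>S. (\<lambda>n. f (r n) s) \<longlonglongrightarrow> l s)"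
  using assms
proof (induction S rule: finite_induct)
  case empty
  show ?case
    using strict_mono_id by blast
next
  case (insert x S)
  then obtain r l where r: "strict_mono r" "\<forall>s\<in>S. (\<lambda>n. f (r n) s) \<longlonglongrightarrow> l s"
    by blast
  obtain r' lx where r': "strict_mono r'" "(\<lambda>n. f (r (r' n)) x) \<longlonglongrightarrow> lx"
    using bounded_real_seq_convergent_subseq[of "\<lambda>n. f (r n) x" B] insert.prems by blast
  have "(\<lambda>n. f (r (r' n)) s) \<longlonglongrightarrow> l s" if "s \<in> S" for s
    using LIMSEQ_subseq_LIMSEQ[OF r(2)[rule_format, OF that] r'(1)] by (simp add: o_def)
  then have "\<forall>s\<in>insert x S. (\<lambda>n. f ((r \<circ> r') n) s) \<longlonglongrightarrow> (l(x := lx)) s"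
    using r'(2) by auto
  then show ?case
    using strict_mono_o[OF r(1) r'(1)] by blast
qed

text \<open>The probability that a Markov chain with transition matrix T and initial
  distribution \<mu> stays in Q at all times 0, ..., t and is in state U at time t.\<close>

fun surviving ::
  "'s set \<Rightarrow> ('s \<Rightarrow> 's \<Rightarrow> real) \<Rightarrow> ('s \<Rightarrow> real) \<Rightarrow> ('s \<Rightarrow> bool) \<Rightarrow> nat \<Rightarrow> 's \<Rightarrow> real"
  where
  "surviving S T \<mu> Q 0 U = (if Q U then \<mu> U else 0)"
| "surviving S T \<mu> Q (Suc t) U = (if Q U then \<Sum>W\<in>S. surviving S T \<mu> Q t W * T W U else 0)"

locale finite_markov_chain =
  fixes S :: "'s set" and T :: "'s \<Rightarrow> 's \<Rightarrow> real" and \<mu> :: "'s \<Rightarrow> real"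
  assumes finite_states: "finite S"
    and trans_nonneg: "\<And>W U. W \<in> S \<Longrightarrow> U \<in> S \<Longrightarrow> 0 \<le> T W U"
    and trans_sum_eq_1: "\<And>W. W \<in> S \<Longrightarrow> (\<Sum>U\<in>S. T W U) = 1"
    and init_nonneg: "\<And>U. U \<in> S \<Longrightarrow> 0 \<le> \<mu> U"
    and init_sum_eq_1: "(\<Sum>U\<in>S. \<mu> U) = 1"
begin

definition stationary_dist :: "('s \<Rightarrow> real) \<Rightarrow> bool" where
  "stationary_dist P \<longleftrightarrow> (\<forall>U\<in>S. 0 \<le> P U) \<and> (\<Sum>U\<in>S. P U) = 1
     \<and> (\<forall>U\<in>S. (\<Sum>W\<in>S. T W U * P W) = P U)"

lemma trans_preserves_mass:
  "(\<Sum>U\<in>S. \<Sum>W\<in>S. m W * T W U) = (\<Sum>W\<in>S. m W)"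
  by (subst sum.swap) (simp add: sum_distrib_left[symmetric] trans_sum_eq_1)

lemma surviving_nonneg: "U \<in> S \<Longrightarrow> 0 \<le> surviving S T \<mu> Q t U"
  by (induction t arbitrary: U) (auto simp: init_nonneg intro!: sum_nonneg mult_nonneg_nonneg trans_nonneg)

lemma surviving_mass_Suc_le:
  "(\<Sum>U\<in>S. surviving S T \<mu> Q (Suc t) U) \<le> (\<Sum>U\<in>S. surviving S T \<mu> Q t U)"
proof -
  have "(\<Sum>U\<in>S. surviving S T \<mu> Q (Suc t) U) \<le> (\<Sum>U\<in>S. \<Sum>W\<in>S. surviving S T \<mu> Q t W * T W U)"
    by (intro sum_mono) (auto intro!: sum_nonneg mult_nonneg_nonneg surviving_nonneg trans_nonneg)
  also have "\<dots> = (\<Sum>W\<in>S. surviving S T \<mu> Q t W)"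
    by (rule trans_preserves_mass)
  finally show ?thesis .
qed

lemma surviving_mass_le_1: "(\<Sum>U\<in>S. surviving S T \<mu> Q t U) \<le> 1"
proof (induction t)
  case 0
  have "(\<Sum>U\<in>S. surviving S T \<mu> Q 0 U) \<le> (\<Sum>U\<in>S. \<mu> U)"
    by (intro sum_mono) (simp add: init_nonneg)
  then show ?case
    using init_sum_eq_1 by simp
next
  case (Suc t)
  then show ?case
    using surviving_mass_Suc_le[of Q t] by linarith
qed

lemma surviving_le_1:
  assumes "U \<in> S"
  shows "surviving S T \<mu> Q t U \<le> 1"
proof -
  have "surviving S T \<mu> Q t U \<le> (\<Sum>U\<in>S. surviving S T \<mu> Q t U)"
    by (rule member_le_sum) (use assms surviving_nonneg finite_states in auto)
  then show ?thesis
    using surviving_mass_le_1 by (rule order_trans)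
qed

lemma surviving_always_mass_eq_1: "(\<Sum>U\<in>S. surviving S T \<mu> (\<lambda>_. True) t U) = 1"
  by (induction t) (simp_all add: init_sum_eq_1 trans_preserves_mass)

definition surviving_avg :: "('s \<Rightarrow> bool) \<Rightarrow> nat \<Rightarrow> 's \<Rightarrow> real" where
  "surviving_avg Q n U = (\<Sum>t<Suc n. surviving S T \<mu> Q t U) / real (Suc n)"

lemma surviving_avg_step:
  "surviving_avg Q n U + (surviving S T \<mu> Q (Suc n) U - surviving S T \<mu> Q 0 U) / real (Suc n)
     = (if Q U then \<Sum>W\<in>S. surviving_avg Q n W * T W U else 0)"
proof -
  define F where "F = surviving S T \<mu> Q"
  have "(\<Sum>t<Suc n. F t U) + F (Suc n) U - F 0 U = (\<Sum>t<Suc n. F (Suc t) U)"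
    using sum.lessThan_Suc_shift[of "\<lambda>t. F t U" "Suc n"] by simp
  also have "\<dots> = (if Q U then \<Sum>t<Suc n. \<Sum>W\<in>S. F t W * T W U else 0)"
    by (simp add: F_def)
  also have "\<dots> = (if Q U then \<Sum>W\<in>S. (\<Sum>t<Suc n. F t W) * T W U else 0)"
    by (simp only: sum.swap[of _ "{..<Suc n}"] sum_distrib_right)
  finally have "((\<Sum>t<Suc n. F t U) + F (Suc n) U - F 0 U) / real (Suc n)
      = (if Q U then \<Sum>W\<in>S. (\<Sum>t<Suc n. F t W) / real (Suc n) * T W U else 0)"
    by (simp add: sum_divide_distrib)
  then show ?thesis
    unfolding surviving_avg_def F_def[symmetric]
    by (simp add: add_divide_distrib diff_divide_distrib)
qed

lemma surviving_avg_nonneg: "U \<in> S \<Longrightarrow> 0 \<le> surviving_avg Q n U"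
  unfolding surviving_avg_def by (simp add: sum_nonneg surviving_nonneg)

lemma surviving_avg_le_1: "U \<in> S \<Longrightarrow> surviving_avg Q n U \<le> 1"
  using sum_mono[of "{..<Suc n}" "\<lambda>t. surviving S T \<mu> Q t U" "\<lambda>_. 1"] surviving_le_1
  unfolding surviving_avg_def by (simp add: divide_le_eq)

lemma surviving_avg_mass_ge:
  assumes "\<And>t. L \<le> (\<Sum>U\<in>S. surviving S T \<mu> Q t U)"
  shows "L \<le> (\<Sum>U\<in>S. surviving_avg Q n U)"
proof -
  have "real (Suc n) * L \<le> (\<Sum>t<Suc n. \<Sum>U\<in>S. surviving S T \<mu> Q t U)"
    using sum_mono[of "{..<Suc n}" "\<lambda>_. L", OF assms] by simp
  then show ?thesis
    unfolding surviving_avg_def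
    by (simp add: sum_divide_distrib[symmetric] sum.swap[of _ S] le_divide_eq mult.commute)
qed

lemma surviving_increment_avg_tendsto_0:
  assumes "U \<in> S"
  shows "(\<lambda>n. (surviving S T \<mu> Q (Suc n) U - surviving S T \<mu> Q 0 U) / real (Suc n)) \<longlonglongrightarrow> 0"
proof (rule tendsto_0_le[where K = 1])
  show "(\<lambda>n. 1 / real (Suc n)) \<longlonglongrightarrow> 0"
    using LIMSEQ_inverse_real_of_nat by (simp add: inverse_eq_divide)
  show "\<forall>\<^sub>F n in sequentially. norm ((surviving S T \<mu> Q (Suc n) U - surviving S T \<mu> Q 0 U) / real (Suc n))
      \<le> norm (1 / real (Suc n)) * 1"
  proof (intro always_eventually allI)
    fix n
    have "\<bar>surviving S T \<mu> Q (Suc n) U - surviving S T \<mu> Q 0 U\<bar> \<le> 1"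
      using surviving_nonneg[OF assms, of Q "Suc n"] surviving_le_1[OF assms, of Q "Suc n"]
        surviving_nonneg[OF assms, of Q 0] surviving_le_1[OF assms, of Q 0]
      by (simp only: abs_le_iff) linarith
    then show "norm ((surviving S T \<mu> Q (Suc n) U - surviving S T \<mu> Q 0 U) / real (Suc n))
        \<le> norm (1 / real (Suc n)) * 1"
      by (simp only: real_norm_def abs_divide mult_1_right abs_of_nat divide_right_mono of_nat_0_le_iff)
  qed
qed

text \<open>The Krylov--Bogolyubov argument, for the chain killed outside Q.\<close>

lemma surviving_invariant_measure:
  assumes "0 < L" "\<And>t. L \<le> (\<Sum>U\<in>S. surviving S T \<mu> Q t U)"
  obtains l where "\<And>U. U \<in> S \<Longrightarrow> 0 \<le> l U" "0 < (\<Sum>U\<in>S. l U)"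
    "\<And>U. U \<in> S \<Longrightarrow> l U = (if Q U then \<Sum>W\<in>S. l W * T W U else 0)"
proof -
  obtain r l where r: "strict_mono r"
    and lim: "\<And>U. U \<in> S \<Longrightarrow> (\<lambda>n. surviving_avg Q (r n) U) \<longlonglongrightarrow> l U"
    using finite_bounded_seqs_convergent_subseq[OF finite_states, of "surviving_avg Q" 1]
      surviving_avg_nonneg surviving_avg_le_1 by (metis abs_of_nonneg)
  show ?thesis
  proof
    show "0 \<le> l U" if "U \<in> S" for U
      using LIMSEQ_le_const[OF lim[OF that]] surviving_avg_nonneg[OF that] by blast
    have "(\<lambda>n. \<Sum>U\<in>S. surviving_avg Q (r n) U) \<longlonglongrightarrow> (\<Sum>U\<in>S. l U)"
      by (rule tendsto_sum) (rule lim)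
    then have "L \<le> (\<Sum>U\<in>S. l U)"
      using LIMSEQ_le_const surviving_avg_mass_ge[OF assms(2)] by blast
    then show "0 < (\<Sum>U\<in>S. l U)"
      using assms(1) by linarith
    show "l U = (if Q U then \<Sum>W\<in>S. l W * T W U else 0)" if "U \<in> S" for U
    proof -
      define err where "err n = (surviving S T \<mu> Q (Suc n) U - surviving S T \<mu> Q 0 U) / real (Suc n)"
        for n
      have "err \<longlonglongrightarrow> 0"
        unfolding err_def using that by (rule surviving_increment_avg_tendsto_0)
      then have "(\<lambda>n. surviving_avg Q (r n) U + err (r n)) \<longlonglongrightarrow> l U + 0"
        by (intro tendsto_add lim[OF that] LIMSEQ_subseq_LIMSEQ[OF _ r, unfolded o_def])
      moreover have "(\<lambda>n. surviving_avg Q (r n) U + err (r n))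
          \<longlonglongrightarrow> (if Q U then \<Sum>W\<in>S. l W * T W U else 0)"
      proof -
        have "(\<lambda>n. \<Sum>W\<in>S. surviving_avg Q (r n) W * T W U) \<longlonglongrightarrow> (\<Sum>W\<in>S. l W * T W U)"
          by (intro tendsto_sum tendsto_mult_right lim)
        then show ?thesis
          unfolding err_def surviving_avg_step by (cases "Q U") simp_all
      qed
      ultimately show ?thesis
        by (simp add: LIMSEQ_unique)
    qed
  qed
qed

text \<open>An invariant measure of the killed chain loses no mass under T, so its image under
  T cannot charge the complement of Q; hence it is invariant for T itself.\<close>

lemma killed_invariant_measure_stationary:
  assumes nonneg: "\<And>U. U \<in> S \<Longrightarrow> 0 \<le> l U" and pos: "0 < (\<Sum>U\<in>S. l U)"
    and inv: "\<And>U. U \<in> S \<Longrightarrow> l U = (if Q U then \<Sum>W\<in>S. l W * T W U else 0)"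
  obtains P where "stationary_dist P" "(\<Sum>U\<in>{U\<in>S. \<not> Q U}. P U) = 0"
proof -
  define g where "g U = (\<Sum>W\<in>S. l W * T W U)" for U
  have g_nonneg: "0 \<le> g U" if "U \<in> S" for U
    unfolding g_def using that nonneg trans_nonneg by (auto intro!: sum_nonneg)
  have l_outside: "l U = 0" if "U \<in> S" "\<not> Q U" for U
    using inv[OF that(1)] that(2) by simp
  have l_inside: "l U = g U" if "U \<in> S" "Q U" for U
    using inv[OF that(1)] that(2) by (simp add: g_def)
  have split: "(\<Sum>U\<in>S. f U) = (\<Sum>U\<in>{U\<in>S. Q U}. f U) + (\<Sum>U\<in>{U\<in>S. \<not> Q U}. f U)"
    for f :: "'s \<Rightarrow> real"
    using finite_states by (subst sum.union_disjoint[symmetric]) (auto intro: sum.cong)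
  have "(\<Sum>U\<in>S. g U) = (\<Sum>U\<in>S. l U)"
    unfolding g_def by (rule trans_preserves_mass)
  also have "\<dots> = (\<Sum>U\<in>{U\<in>S. Q U}. g U)"
    using split[of l] l_outside l_inside by simp
  finally have "(\<Sum>U\<in>{U\<in>S. \<not> Q U}. g U) = 0"
    using split[of g] by simp
  then have g_eq_l: "g U = l U" if "U \<in> S" for U
    using sum_nonneg_eq_0_iff[of "{U\<in>S. \<not> Q U}" g] finite_states g_nonneg that l_outside l_inside
    by (cases "Q U") auto
  define P where "P U = l U / (\<Sum>U\<in>S. l U)" for U
  have "stationary_dist P"
    unfolding stationary_dist_def
  proof (intro conjI ballI)
    show "(\<Sum>U\<in>S. P U) = 1"
      using pos by (simp add: P_def sum_divide_distrib[symmetric])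
    show "(\<Sum>W\<in>S. T W U * P W) = P U" if "U \<in> S" for U
      using g_eq_l[OF that]
      by (simp add: P_def g_def sum_divide_distrib[symmetric] mult.commute)
  qed (use nonneg pos in \<open>simp add: P_def\<close>)
  moreover have "(\<Sum>U\<in>{U\<in>S. \<not> Q U}. P U) = 0"
    by (simp add: P_def l_outside)
  ultimately show ?thesis
    using that by blast
qed

theorem surviving_mass_tendsto_0:
  assumes "\<And>P. stationary_dist P \<Longrightarrow> 0 < (\<Sum>U\<in>{U\<in>S. \<not> Q U}. P U)"
  shows "(\<lambda>t. \<Sum>U\<in>S. surviving S T \<mu> Q t U) \<longlonglongrightarrow> 0"
proof -
  define m where "m t = (\<Sum>U\<in>S. surviving S T \<mu> Q t U)" for t
  have m_nonneg: "0 \<le> m t" for t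
    unfolding m_def by (auto intro!: sum_nonneg surviving_nonneg)
  have "decseq m"
    unfolding m_def by (rule decseq_SucI) (rule surviving_mass_Suc_le)
  then obtain L where L: "m \<longlonglongrightarrow> L" and L_le: "\<And>t. L \<le> m t"
    using decseq_convergent[of m 0] m_nonneg by blast
  have "\<not> 0 < L"
  proof
    assume "0 < L"
    then obtain l where "\<And>U. U \<in> S \<Longrightarrow> 0 \<le> l U" "0 < (\<Sum>U\<in>S. l U)"
      "\<And>U. U \<in> S \<Longrightarrow> l U = (if Q U then \<Sum>W\<in>S. l W * T W U else 0)"
      using surviving_invariant_measure L_le unfolding m_def by blast
    then obtain P where "stationary_dist P" "(\<Sum>U\<in>{U\<in>S. \<not> Q U}. P U) = 0"
      by (rule killed_invariant_measure_stationary)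
    then show False
      using assms by force
  qed
  moreover have "0 \<le> L"
    using LIMSEQ_le_const[OF L] m_nonneg by blast
  ultimately show ?thesis
    using L unfolding m_def by simp
qed

end

lemma unr_par_index_le: "(y, j) \<in> unr_par par1 parT (x, i) \<Longrightarrow> j \<le> i"
  unfolding unr_par_def by (auto split: if_splits)

lemma slice_subset: "W \<subseteq> V \<times> I \<Longrightarrow> slice W i \<subseteq> V"
  unfolding slice_def by auto

locale dbn =
  fixes V :: "'v set"
    and par1 :: "'v \<Rightarrow> 'v set" and cpt1 :: "'v \<Rightarrow> 'v set \<Rightarrow> real"
    and parT :: "'v \<Rightarrow> 'v tnode set" and cptT :: "'v \<Rightarrow> 'v tnode set \<Rightarrow> real"
  assumes initial_bn: "bn_wf V par1 cpt1"
    and transition_tbn: "tbn_wf V parT cptT"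
begin

lemma finite_vars: "finite V"
  using initial_bn unfolding bn_wf_def by blast

sublocale finite_markov_chain "Pow V" "tbn_trans V parT cptT" "bn_joint V par1 cpt1"
  by unfold_locales
    (simp_all add: finite_vars tbn_trans_nonneg[OF transition_tbn] tbn_trans_sum_eq_1[OF transition_tbn]
      bn_joint_nonneg[OF initial_bn] bn_joint_sum_eq_1[OF initial_bn])

lemma stationary_dist_iff: "stationary_dist P \<longleftrightarrow> stationary V parT cptT P"
  unfolding stationary_dist_def stationary_def ..

definition unrolled_joint :: "nat \<Rightarrow> ('v \<times> nat) set \<Rightarrow> real" where
  "unrolled_joint n W = bn_joint (V \<times> {1..n}) (unr_par par1 parT) (unr_cpt cpt1 cptT) W"

lemma unrolled_joint_1: "unrolled_joint 1 (U \<times> {1}) = bn_joint V par1 cpt1 U"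
proof -
  have slice_1: "V \<times> {1..1} = (\<lambda>x. (x, 1::nat)) ` V" "inj_on (\<lambda>x. (x, 1::nat)) V"
    by (auto simp: inj_on_def)
  have cpt: "unr_cpt cpt1 cptT (x, 1) (U \<times> {1} \<inter> unr_par par1 parT (x, 1)) = cpt1 x (U \<inter> par1 x)"
    for x
    by (auto simp: unr_cpt_def unr_par_def intro!: arg_cong[where f = "cpt1 x"])
  show ?thesis
    unfolding unrolled_joint_def bn_joint_def slice_1(1) prod.reindex[OF slice_1(2)]
    by (rule prod.cong) (simp_all only: o_def cpt mem_Times_iff fst_conv snd_conv singleton_iff simp_thms)
qed

lemma unrolled_joint_extend:
  assumes "1 \<le> n" "W \<subseteq> V \<times> {1..n}"
  shows "unrolled_joint (Suc n) (W \<union> U \<times> {Suc n})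
    = unrolled_joint n W * tbn_trans V parT cptT (slice W n) U"
proof -
  define W' where "W' = W \<union> U \<times> {Suc n}"
  define fac where "fac X m = (if m \<in> X then unr_cpt cpt1 cptT m (X \<inter> unr_par par1 parT m)
      else 1 - unr_cpt cpt1 cptT m (X \<inter> unr_par par1 parT m))" for X m
  have fac_old_slice: "fac W' (x, i) = fac W (x, i)" if "i \<le> n" for x i
  proof -
    have "W' \<inter> unr_par par1 parT (x, i) = W \<inter> unr_par par1 parT (x, i)"
      using that unr_par_index_le[of _ _ par1 parT x i] by (fastforce simp: W'_def)
    moreover have "(x, i) \<in> W' \<longleftrightarrow> (x, i) \<in> W"
      using that by (auto simp: W'_def)
    ultimately show ?thesis
      by (simp add: fac_def)
  qed
  have fac_new_slice: "fac W' (x, Suc n) = (if x \<in> U then cptT x (tbn_true_parents parT x (slice W n) U)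
      else 1 - cptT x (tbn_true_parents parT x (slice W n) U))" for x
  proof -
    have "{Cur y |y. (y, n) \<in> W' \<inter> unr_par par1 parT (x, Suc n)}
        \<union> {Nxt y |y. (y, Suc n) \<in> W' \<inter> unr_par par1 parT (x, Suc n)}
        = tbn_true_parents parT x (slice W n) U"
      using assms unfolding W'_def unr_par_def tbn_true_parents_def slice_def
      by (auto split: tnode.splits) (metis tnode.exhaust)+
    moreover have "(x, Suc n) \<in> W' \<longleftrightarrow> x \<in> U"
      using assms(2) by (auto simp: W'_def)
    ultimately show ?thesis
      using assms(1) by (simp add: fac_def unr_cpt_def)
  qed
  have "V \<times> {1..Suc n} = V \<times> {1..n} \<union> (\<lambda>x. (x, Suc n)) ` V"
    by auto
  moreover have "V \<times> {1..n} \<inter> (\<lambda>x. (x, Suc n)) ` V = {}" "inj_on (\<lambda>x. (x, Suc n)) V"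
    by (auto simp: inj_on_def)
  ultimately have "unrolled_joint (Suc n) W'
      = (\<Prod>m\<in>V \<times> {1..n}. fac W' m) * (\<Prod>x\<in>V. fac W' (x, Suc n))"
    unfolding unrolled_joint_def bn_joint_def fac_def[symmetric]
    using finite_vars by (simp add: prod.union_disjoint prod.reindex)
  also have "\<dots> = unrolled_joint n W * tbn_trans V parT cptT (slice W n) U"
    unfolding unrolled_joint_def bn_joint_def fac_def[symmetric] tbn_trans_eq fac_new_slice
    by (intro arg_cong2[where f = "(*)"] prod.cong) (auto simp: fac_old_slice)
  finally show ?thesis
    unfolding W'_def .
qed

definition staying_paths :: "('v set \<Rightarrow> bool) \<Rightarrow> nat \<Rightarrow> ('v \<times> nat) set set" where
  "staying_paths Q n = {W. W \<subseteq> V \<times> {1..n} \<and> (\<forall>i\<in>{1..n}. Q (slice W i))}"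

lemma sum_staying_paths_by_last_slice:
  "(\<Sum>W\<in>staying_paths Q n. f W) = (\<Sum>U\<in>Pow V. \<Sum>W\<in>{W\<in>staying_paths Q n. slice W n = U}. f W)"
proof (rule sum.group[symmetric])
  show "finite (staying_paths Q n)"
    by (rule finite_subset[of _ "Pow (V \<times> {1..n})"]) (auto simp: staying_paths_def finite_vars)
qed (auto simp: finite_vars staying_paths_def slice_def)

lemma staying_paths_ending_in:
  assumes "Q U" "U \<subseteq> V"
  shows "{W\<in>staying_paths Q (Suc n). slice W (Suc n) = U} = (\<lambda>W. W \<union> U \<times> {Suc n}) ` staying_paths Q n"
    and "inj_on (\<lambda>W. W \<union> U \<times> {Suc n}) (staying_paths Q n)"
proof -
  have slice_extend: "slice (W \<union> U \<times> {Suc n}) i = (if i = Suc n then U else slice W i)"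
    if "W \<subseteq> V \<times> {1..n}" "i \<le> Suc n" for W i
    using that by (auto simp: slice_def)
  have restrict_extend: "(W \<union> U \<times> {Suc n}) \<inter> V \<times> {1..n} = W" if "W \<subseteq> V \<times> {1..n}" for W
    using that by auto
  show "inj_on (\<lambda>W. W \<union> U \<times> {Suc n}) (staying_paths Q n)"
    by (rule inj_on_inverseI[where g = "\<lambda>W. W \<inter> V \<times> {1..n}"])
      (use restrict_extend in \<open>auto simp: staying_paths_def\<close>)
  show "{W\<in>staying_paths Q (Suc n). slice W (Suc n) = U} = (\<lambda>W. W \<union> U \<times> {Suc n}) ` staying_paths Q n"
  proof (intro equalityI subsetI)
    fix W assume W: "W \<in> {W\<in>staying_paths Q (Suc n). slice W (Suc n) = U}"
    then have "W = (W \<inter> V \<times> {1..n}) \<union> U \<times> {Suc n}"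
      by (auto simp: staying_paths_def slice_def le_Suc_eq)
    moreover have "slice (W \<inter> V \<times> {1..n}) i = slice W i" if "i \<le> n" for i
      using W that by (auto simp: staying_paths_def slice_def)
    then have "W \<inter> V \<times> {1..n} \<in> staying_paths Q n"
      using W by (auto simp: staying_paths_def)
    ultimately show "W \<in> (\<lambda>W. W \<union> U \<times> {Suc n}) ` staying_paths Q n"
      by blast
  next
    fix W assume "W \<in> (\<lambda>W. W \<union> U \<times> {Suc n}) ` staying_paths Q n"
    then obtain W0 where "W = W0 \<union> U \<times> {Suc n}" "W0 \<in> staying_paths Q n"
      by blast
    then show "W \<in> {W\<in>staying_paths Q (Suc n). slice W (Suc n) = U}"
      using assms slice_extend[of W0] by (auto simp: staying_paths_def le_Suc_eq)
  qed
qed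

lemma staying_paths_ending_outside:
  "\<not> Q U \<Longrightarrow> {W\<in>staying_paths Q (Suc n). slice W (Suc n) = U} = {}"
  by (auto simp: staying_paths_def)

lemma sum_unrolled_joint_staying_paths_ending_in:
  assumes "U \<subseteq> V"
  shows "(\<Sum>W\<in>{W\<in>staying_paths Q (Suc t). slice W (Suc t) = U}. unrolled_joint (Suc t) W)
    = surviving (Pow V) (tbn_trans V parT cptT) (bn_joint V par1 cpt1) Q t U"
  using assms
proof (induction t arbitrary: U)
  case 0
  show ?case
  proof (cases "Q U")
    case True
    have "staying_paths Q 0 = {{}}"
      by (auto simp: staying_paths_def)
    then show ?thesis
      using True unrolled_joint_1 by (simp add: staying_paths_ending_in(1)[where Q = Q and U = U, OF True "0.prems"])
  qed (simp add: staying_paths_ending_outside)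
next
  case (Suc t)
  show ?case
  proof (cases "Q U")
    case True
    have "(\<Sum>W\<in>{W\<in>staying_paths Q (Suc (Suc t)). slice W (Suc (Suc t)) = U}. unrolled_joint (Suc (Suc t)) W)
        = (\<Sum>W\<in>staying_paths Q (Suc t). unrolled_joint (Suc t) W * tbn_trans V parT cptT (slice W (Suc t)) U)"
      unfolding staying_paths_ending_in(1)[where Q = Q and U = U, OF True Suc.prems]
      by (simp add: sum.reindex[OF staying_paths_ending_in(2)[where Q = Q and U = U, OF True Suc.prems]])
        (rule sum.cong, auto simp: staying_paths_def unrolled_joint_extend)
    also have "\<dots> = (\<Sum>U'\<in>Pow V. (\<Sum>W\<in>{W\<in>staying_paths Q (Suc t). slice W (Suc t) = U'}.
        unrolled_joint (Suc t) W) * tbn_trans V parT cptT U' U)"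
      unfolding sum_staying_paths_by_last_slice[where Q = Q and n = "Suc t"] sum_distrib_right
      by (intro sum.cong) auto
    finally show ?thesis
      using True by (simp add: Suc.IH)
  qed (simp add: staying_paths_ending_outside)
qed

lemma sum_unrolled_joint_staying_paths:
  "(\<Sum>W\<in>staying_paths Q (Suc t). unrolled_joint (Suc t) W)
    = (\<Sum>U\<in>Pow V. surviving (Pow V) (tbn_trans V parT cptT) (bn_joint V par1 cpt1) Q t U)"
  unfolding sum_staying_paths_by_last_slice[where Q = Q] by (simp add: sum_unrolled_joint_staying_paths_ending_in)

lemma prob_within_Suc:
  assumes "context_formula V Itp sa sc Ov c \<phi>"
  shows "prob_within V par1 cpt1 parT cptT Itp sa sc Ov c (Suc t)
    = 1 - (\<Sum>U\<in>Pow V. surviving (Pow V) (tbn_trans V parT cptT) (bn_joint V par1 cpt1)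
                            (\<lambda>U. \<not> peval U \<phi>) t U)"
proof -
  have all: "Pow (V \<times> {1..Suc t}) = staying_paths (\<lambda>_. True) (Suc t)"
    by (auto simp: staying_paths_def)
  have "entails Itp sa sc (restrict_ont Ov (slice W i)) c \<longleftrightarrow> peval (slice W i) \<phi>"
    if "W \<subseteq> V \<times> {1..Suc t}" for W i
    using assms slice_subset[OF that] unfolding context_formula_def by blast
  then have "{W. W \<subseteq> V \<times> {1..Suc t} \<and> (\<exists>i\<in>{1..Suc t}. entails Itp sa sc (restrict_ont Ov (slice W i)) c)}
      = staying_paths (\<lambda>_. True) (Suc t) - staying_paths (\<lambda>U. \<not> peval U \<phi>) (Suc t)"
    by (auto simp: staying_paths_def)
  moreover have "staying_paths (\<lambda>U. \<not> peval U \<phi>) (Suc t) \<subseteq> staying_paths (\<lambda>_. True) (Suc t)"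
    by (auto simp: staying_paths_def)
  moreover have "finite (staying_paths (\<lambda>_. True) (Suc t))"
    unfolding all[symmetric] using finite_vars by simp
  ultimately show ?thesis
    unfolding prob_within_def unrolled_joint_def[symmetric]
    by (simp add: sum_diff sum_unrolled_joint_staying_paths surviving_always_mass_eq_1)
qed

end

lemma delta_le_stationary_mass:
  assumes "stationary V parT cptT P"
  shows "delta V parT cptT \<phi> \<le> (\<Sum>W\<in>{W\<in>Pow V. peval W \<phi>}. P W)"
  unfolding delta_def
proof (rule cInf_lower)
  show "bdd_below {\<Sum>W\<in>{W\<in>Pow V. peval W \<phi>}. P W |P. stationary V parT cptT P}"
    by (rule bdd_belowI[where m = 0]) (auto simp: stationary_def intro!: sum_nonneg)
qed (use assms in blast)

theorem mainTheorem3: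
  fixes V :: "'v set"
    and Ont :: "'a set set" and Itp :: "'i set"
    and sa :: "'i \<Rightarrow> 'a \<Rightarrow> bool" and sc :: "'i \<Rightarrow> 'c \<Rightarrow> bool"
    and Ov :: "('a \<times> ('v \<times> bool) set) set" and c :: 'c and \<phi> :: "'v pform"
    and par1 :: "'v \<Rightarrow> 'v set" and cpt1 :: "'v \<Rightarrow> 'v set \<Rightarrow> real"
    and parT :: "'v \<Rightarrow> 'v tnode set" and cptT :: "'v \<Rightarrow> 'v tnode set \<Rightarrow> real"
  assumes "finite V"
    and "ontology_language Ont"
    and "V_ontology V Ont Ov"
    and "bn_wf V par1 cpt1"
    and "tbn_wf V parT cptT"
    and "context_formula V Itp sa sc Ov c \<phi>"
    and "delta V parT cptT \<phi> > 0"
  shows "(\<lambda>t. prob_within V par1 cpt1 parT cptT Itp sa sc Ov c t) \<longlonglongrightarrow> 1"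
proof -
  interpret dbn V par1 cpt1 parT cptT
    using assms(4,5) by unfold_locales
  let ?Q = "\<lambda>U. \<not> peval U \<phi>"
  have "0 < (\<Sum>U\<in>{U\<in>Pow V. \<not> ?Q U}. P U)" if "stationary_dist P" for P
    using delta_le_stationary_mass[of V parT cptT P \<phi>] assms(7) that
    by (simp add: stationary_dist_iff)
  then have "(\<lambda>t. \<Sum>U\<in>Pow V. surviving (Pow V) (tbn_trans V parT cptT) (bn_joint V par1 cpt1) ?Q t U)
      \<longlonglongrightarrow> 0"
    by (rule surviving_mass_tendsto_0)
  then have "(\<lambda>t. prob_within V par1 cpt1 parT cptT Itp sa sc Ov c (Suc t)) \<longlonglongrightarrow> 1 - 0"
    unfolding prob_within_Suc[OF assms(6)] by (intro tendsto_diff tendsto_const)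
  then show ?thesis
    by (simp add: LIMSEQ_imp_Suc)
qed

end
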